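(* Let $X$ be a transitive subshift whose language $\mathcal L$ has eventually constant growth with rate $K$, and let $x\in X$. Then either $\mathcal L$ is periodic, or there is $N$ such that for all $n\ge N$, all $j\in\mathbb N$ and both $\mathfrak s=\ell$ and $\mathfrak s=r$, the word $x_{[j,j+(K+2)n-2]}$ contains some $\mathfrak s$-special word $w\in\mathcal L_n$ as a subword.
   Context: A subshift is a nonempty closed $X\subseteq\mathcal A^{\mathbb N}$ ($\mathcal A$ finite) with $SX=X$ for the left shift $(Sx)_i=x_{i+1}$; transitive means for all nonempty open $U,V\subseteq X$ some $S^n(U)\cap V\ne\emptyset$. $\mathcal L$ is the set of finite nonempty words occurring in points of $X$, $\mathcal L_n$ those of length $n$, $p(n)=|\mathcal L_n|$, and $x_{[i,j]}=x_i\cdots x_j$. Eventually constant growth with rate $K$: there are $N_0,C$ with $p(n)=Kn+C$ for all $n\ge N_0$. Periodic: there is $P$ with $w_i=w_{i+P}$ for all $w\in\mathcal L$, $1\le i\le |w|-P$. $w$ is $\ell$-special if $|\{a:aw\in\mathcal L\}|\ge 2$, $r$-special if $|\{b:wb\in\mathcal L\}|\ge2$. *)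

theory Defs
  imports Main "HOL-Library.Sublist"
begin

text \<open>The topology on A^N is the product of discrete topologies; its basic open sets
  are cylinders.\<close>

definition cyl :: "(nat \<Rightarrow> 'a) set \<Rightarrow> (nat \<Rightarrow> 'a) \<Rightarrow> nat \<Rightarrow> (nat \<Rightarrow> 'a) set" where
  "cyl X x m = {y \<in> X. \<forall>i<m. y i = x i}"

definition open_in_X :: "(nat \<Rightarrow> 'a) set \<Rightarrow> (nat \<Rightarrow> 'a) set \<Rightarrow> bool" where
  "open_in_X X U \<longleftrightarrow> U \<subseteq> X \<and> (\<forall>x\<in>U. \<exists>m. cyl X x m \<subseteq> U)"

text \<open>Closedness in the product topology: a point all of whose prefixes
  occur as prefixes of points of X lies in X.\<close>
definition closed_seq :: "(nat \<Rightarrow> 'a) set \<Rightarrow> bool" where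
  "closed_seq X \<longleftrightarrow> (\<forall>x. (\<forall>m. \<exists>y\<in>X. \<forall>i<m. y i = x i) \<longrightarrow> x \<in> X)"

definition shift :: "(nat \<Rightarrow> 'a) \<Rightarrow> (nat \<Rightarrow> 'a)" where
  "shift x = (\<lambda>i. x (Suc i))"

definition subshift :: "(nat \<Rightarrow> 'a::finite) set \<Rightarrow> bool" where
  "subshift X \<longleftrightarrow> X \<noteq> {} \<and> closed_seq X \<and> shift ` X = X"

definition transitive_shift :: "(nat \<Rightarrow> 'a) set \<Rightarrow> bool" where
  "transitive_shift X \<longleftrightarrow>
     (\<forall>U V. open_in_X X U \<longrightarrow> open_in_X X V \<longrightarrow> U \<noteq> {} \<longrightarrow> V \<noteq> {} \<longrightarrow>
        (\<exists>n. (shift ^^ n) ` U \<inter> V \<noteq> {}))"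

text \<open>x_[i,j] as a list (zero-based indices).\<close>
definition factor :: "(nat \<Rightarrow> 'a) \<Rightarrow> nat \<Rightarrow> nat \<Rightarrow> 'a list" where
  "factor x i j = map x [i..<Suc j]"

definition lang :: "(nat \<Rightarrow> 'a) set \<Rightarrow> 'a list set" where
  "lang X = {w. w \<noteq> [] \<and> (\<exists>x\<in>X. \<exists>i. w = map x [i..<i + length w])}"

definition lang_n :: "(nat \<Rightarrow> 'a) set \<Rightarrow> nat \<Rightarrow> 'a list set" where
  "lang_n X n = {w \<in> lang X. length w = n}"

definition complexity :: "(nat \<Rightarrow> 'a) set \<Rightarrow> nat \<Rightarrow> nat" where
  "complexity X n = card (lang_n X n)"

definition eventually_constant_growth :: "(nat \<Rightarrow> 'a) set \<Rightarrow> nat \<Rightarrow> bool" where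
  "eventually_constant_growth X K \<longleftrightarrow>
     (\<exists>N0 (C::int). \<forall>n\<ge>N0. int (complexity X n) = int K * int n + C)"

definition periodic_lang :: "'a list set \<Rightarrow> bool" where
  "periodic_lang L \<longleftrightarrow> (\<exists>P>0. \<forall>w\<in>L. \<forall>i. i + P < length w \<longrightarrow> w ! i = w ! (i + P))"

definition l_special :: "'a list set \<Rightarrow> 'a list \<Rightarrow> bool" where
  "l_special L w \<longleftrightarrow> card {a. a # w \<in> L} \<ge> 2"

definition r_special :: "'a list set \<Rightarrow> 'a list \<Rightarrow> bool" where
  "r_special L w \<longleftrightarrow> card {b. w @ [b] \<in> L} \<ge> 2"

end

theory Submission
  imports Defs
begin

text \<open>Let \<open>W\<close> be a word of \<open>L\<close> of length at least \<open>n + p(n)\<close> (eventually the factors of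
  length \<open>(K+2)n - 1\<close> are such words, as \<open>p(n) = Kn + C \<le> (K+1)n - 1\<close>). If no subword of
  length \<open>n\<close> of \<open>W\<close> is left special, every window of length \<open>n\<close> in \<open>W\<close> determines the
  window one position to its left. Among the first \<open>p(n) + 1\<close> windows two coincide, so
  stepping left runs through a cycle of windows of some period \<open>P\<close>. By irreducibility every
  word of length \<open>n\<close> is joined to this cycle and, stepping back from the cycle, is found
  to lie on it. Hence every word of length \<open>n\<close> has a unique left extension and returns to
  itself after \<open>P\<close> left steps, which forces all of \<open>L\<close> to be \<open>P\<close>-periodic. Right special
  words are handled by the same argument for the reversed language.\<close>

definition factorial :: "'a list set \<Rightarrow> bool" where
  "factorial L \<longleftrightarrow> (\<forall>w\<in>L. \<forall>u. sublist u w \<longrightarrow> u \<noteq> [] \<longrightarrow> u \<in> L)"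

definition left_extendable :: "'a list set \<Rightarrow> bool" where
  "left_extendable L \<longleftrightarrow> (\<forall>w\<in>L. \<exists>a. a # w \<in> L)"

definition right_extendable :: "'a list set \<Rightarrow> bool" where
  "right_extendable L \<longleftrightarrow> (\<forall>w\<in>L. \<exists>b. w @ [b] \<in> L)"

definition irreducible :: "'a list set \<Rightarrow> bool" where
  "irreducible L \<longleftrightarrow> (\<forall>u\<in>L. \<forall>v\<in>L. \<exists>z. u @ z @ v \<in> L)"

lemma factorialD: "factorial L \<Longrightarrow> w \<in> L \<Longrightarrow> sublist u w \<Longrightarrow> u \<noteq> [] \<Longrightarrow> u \<in> L"
  unfolding factorial_def by blast

lemma right_extendable_append:
  assumes "right_extendable L" "w \<in> L"
  shows "\<exists>z. length z = m \<and> w @ z \<in> L"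
proof (induction m)
  case 0
  show ?case using assms(2) by simp
next
  case (Suc m)
  then obtain z where "length z = m" "w @ z \<in> L" by blast
  moreover obtain b where "(w @ z) @ [b] \<in> L"
    using assms(1) \<open>w @ z \<in> L\<close> unfolding right_extendable_def by blast
  ultimately show ?case by (intro exI[of _ "z @ [b]"]) simp
qed

abbreviation window :: "nat \<Rightarrow> 'a list \<Rightarrow> nat \<Rightarrow> 'a list" where
  "window n Y k \<equiv> take n (drop k Y)"

lemma sublist_window: "sublist (window n Y k) Y"
  by (meson sublist_drop sublist_take sublist_order.order.trans)

lemma window_in_factorial:
  assumes "factorial L" "Y \<in> L" "n \<ge> 1" "k + n \<le> length Y"
  shows "window n Y k \<in> L"
  using factorialD[OF assms(1,2) sublist_window] assms(3,4) by auto

lemma not_l_special_unique: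
  fixes L :: "'a::finite list set"
  assumes "\<not> l_special L v" "a # v \<in> L" "b # v \<in> L"
  shows "a = b"
proof (rule ccontr)
  assume "a \<noteq> b"
  have "card {a, b} \<le> card {c. c # v \<in> L}"
    using assms(2,3) by (intro card_mono) auto
  with \<open>a \<noteq> b\<close> assms(1) show False unfolding l_special_def by simp
qed

text \<open>When \<open>v\<close> has a unique left extension \<open>a\<close>, \<open>left_step L v\<close> is the window of length
  \<open>|v|\<close> one position to the left of \<open>v\<close> in any word of \<open>L\<close> containing \<open>a v\<close>.\<close>
definition left_step :: "'a list set \<Rightarrow> 'a list \<Rightarrow> 'a list" where
  "left_step L v = (SOME a. a # v \<in> L) # butlast v"

lemma left_step_eq:
  fixes L :: "'a::finite list set"
  assumes "\<not> l_special L v" "a # v \<in> L"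
  shows "left_step L v = a # butlast v"
proof -
  have "(SOME a. a # v \<in> L) # v \<in> L" using assms(2) by (rule someI)
  with assms have "(SOME a. a # v \<in> L) = a" by (blast intro: not_l_special_unique)
  thus ?thesis unfolding left_step_def by simp
qed

lemma left_step_window:
  fixes L :: "'a::finite list set"
  assumes "factorial L" "Y \<in> L" "n \<ge> 1" "Suc k + n \<le> length Y"
    and "\<not> l_special L (window n Y (Suc k))"
  shows "left_step L (window n Y (Suc k)) = window n Y k"
proof -
  have drop_k: "drop k Y = Y ! k # drop (Suc k) Y"
    using assms(4) by (simp add: Cons_nth_drop_Suc)
  have "Y ! k # window n Y (Suc k) = window (Suc n) Y k" using drop_k by simp
  also have "\<dots> \<in> L" using window_in_factorial[OF assms(1,2)] assms(4) by simp
  finally have "left_step L (window n Y (Suc k)) = Y ! k # butlast (window n Y (Suc k))"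
    using assms(5) by (rule left_step_eq[rotated])
  also have "\<dots> = window n Y k"
    using assms(3,4) drop_k by (cases n) (auto simp: butlast_take)
  finally show ?thesis .
qed

lemma left_step_funpow_window:
  fixes L :: "'a::finite list set"
  assumes "factorial L" "Y \<in> L" "n \<ge> 1" "q + d + n \<le> length Y"
    and "\<And>i. q < i \<Longrightarrow> i \<le> q + d \<Longrightarrow> \<not> l_special L (window n Y i)"
  shows "(left_step L ^^ d) (window n Y (q + d)) = window n Y q"
  using assms(4,5)
proof (induction d)
  case 0
  show ?case by simp
next
  case (Suc d)
  have "(left_step L ^^ Suc d) (window n Y (q + Suc d))
      = (left_step L ^^ d) (left_step L (window n Y (Suc (q + d))))"
    by (simp only: add_Suc_right funpow_Suc_right o_apply)
  also have "left_step L (window n Y (Suc (q + d))) = window n Y (q + d)"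
    using Suc.prems by (intro left_step_window[OF assms(1-3)]) auto
  also have "(left_step L ^^ d) (window n Y (q + d)) = window n Y q"
    using Suc.prems by (intro Suc.IH) auto
  finally show ?case .
qed

lemma left_step_windows_cycle:
  fixes L :: "'a::finite list set"
  assumes L: "factorial L" and W: "W \<in> L" "t + n \<le> length W" and n: "n \<ge> 1"
    and st: "s \<le> t" "window n W s = window n W t"
    and not_special: "\<And>i. s \<le> i \<Longrightarrow> i \<le> t \<Longrightarrow> \<not> l_special L (window n W i)"
    and k: "s \<le> k" "k \<le> t"
  shows "(left_step L ^^ (t - s)) (window n W k) = window n W k"
proof -
  have walk_back: "(left_step L ^^ (j - i)) (window n W j) = window n W i"
    if "s \<le> i" "i \<le> j" "j \<le> t" for i j
    using left_step_funpow_window[OF L W(1) n, of i "j - i"] that W(2) not_special by simp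
  have "t - s = (t - k) + (k - s)" using k by simp
  hence "(left_step L ^^ (t - s)) (window n W k)
      = (left_step L ^^ (t - k)) ((left_step L ^^ (k - s)) (window n W k))"
    by (simp only: funpow_add o_apply)
  also have "\<dots> = window n W k"
    using walk_back[of s k] walk_back[of k t] k st by simp
  finally show ?thesis .
qed

text \<open>Walking backwards from an occurrence of \<open>window n W s\<close> never leaves the cycle of
  windows of \<open>W\<close>, because all of them have unique left extensions; irreducibility lets
  every word of length \<open>n\<close> be reached this way.\<close>
lemma word_in_windows_cycle:
  fixes L :: "'a::finite list set"
  assumes L: "factorial L" "irreducible L" and W: "W \<in> L" "t + n \<le> length W" and n: "n \<ge> 1"
    and st: "s < t" "window n W s = window n W t"
    and not_special: "\<And>i. s \<le> i \<Longrightarrow> i \<le> t \<Longrightarrow> \<not> l_special L (window n W i)"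
    and v: "v \<in> L" "length v = n"
  shows "v \<in> window n W ` {s..t}"
proof -
  let ?G = "window n W ` {s..t}"
  have step_closed: "left_step L g \<in> ?G" if g: "g \<in> ?G" for g
  proof -
    obtain k where k: "s \<le> k" "k \<le> t" "g = window n W k"
      using g by auto
    define k' where "k' = (if k = s then t else k)"
    have "g = window n W k'" "s < k'" "k' \<le> t" using k st unfolding k'_def by auto
    moreover have "left_step L (window n W (Suc (k' - 1))) = window n W (k' - 1)"
      using \<open>s < k'\<close> \<open>k' \<le> t\<close> W not_special
      by (intro left_step_window[OF L(1) W(1) n]) auto
    ultimately show ?thesis by force
  qed
  have "window n W s \<in> L" using window_in_factorial[OF L(1) W(1) n] st W(2) by simp
  then obtain z where joined: "v @ z @ window n W s \<in> L"
    using L(2) v(1) unfolding irreducible_def by blast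
  define Y where "Y = v @ z @ window n W s"
  define M where "M = length Y - n"
  have len_Ws: "length (window n W s) = n" using W(2) st by simp
  hence len_Y: "length Y = M + n" unfolding M_def Y_def by simp
  have "window n Y (M - d) \<in> ?G" if "d \<le> M" for d
    using that
  proof (induction d)
    case 0
    have "drop M Y = window n W s" using len_Ws unfolding M_def Y_def by simp
    hence "window n Y M = window n W s" using len_Ws by simp
    thus ?case using st by auto
  next
    case (Suc d)
    then obtain i where i: "s \<le> i" "i \<le> t" "window n Y (Suc (M - Suc d)) = window n W i"
      by (auto simp: Suc_diff_Suc)
    have "left_step L (window n Y (Suc (M - Suc d))) = window n Y (M - Suc d)"
      using joined i not_special Suc.prems len_Y unfolding Y_def[symmetric]
      by (intro left_step_window[OF L(1) _ n]) auto
    with step_closed[of "window n W i"] i show ?case by auto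
  qed
  from this[of M] show ?thesis using v(2) unfolding Y_def by simp
qed

lemma periodic_lang_if_left_step_periodic:
  fixes L :: "'a::finite list set"
  assumes L: "factorial L" "right_extendable L" and n: "n \<ge> 1" and "P > 0"
    and words: "\<And>v. v \<in> L \<Longrightarrow> length v = n \<Longrightarrow> \<not> l_special L v \<and> (left_step L ^^ P) v = v"
  shows "periodic_lang L"
  unfolding periodic_lang_def
proof (intro exI[of _ P] conjI \<open>P > 0\<close> ballI allI impI)
  fix w i assume w: "w \<in> L" and i: "i + P < length w"
  obtain z where z: "length z = n" "w @ z \<in> L" using right_extendable_append[OF L(2) w] by blast
  define Y where "Y = w @ z"
  have Y: "Y \<in> L" "length Y = length w + n" using z unfolding Y_def by auto
  have not_special: "\<not> l_special L (window n Y q)"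
    and fixed: "(left_step L ^^ P) (window n Y q) = window n Y q" if "q + n \<le> length Y" for q
    using words[OF window_in_factorial[OF L(1) Y(1) n that]] that by auto
  have "window n Y i = (left_step L ^^ P) (window n Y (i + P))"
    using i Y(2) not_special
    by (intro left_step_funpow_window[OF L(1) Y(1) n, symmetric]) auto
  also have "\<dots> = window n Y (i + P)" using i Y(2) fixed by simp
  finally have "window n Y i ! 0 = window n Y (i + P) ! 0" by (rule arg_cong)
  hence "Y ! i = Y ! (i + P)" using i n Y(2) by simp
  thus "w ! i = w ! (i + P)" using i unfolding Y_def by (simp add: nth_append)
qed

lemma finite_lists_of_length: "finite {v :: 'a::finite list. length v = n}"
  using finite_lists_length_eq[of "UNIV :: 'a set" n] by simp

lemma periodic_lang_if_long_word_without_l_special: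
  fixes L :: "'a::finite list set"
  assumes L: "factorial L" "right_extendable L" "irreducible L" and W: "W \<in> L" and n: "n \<ge> 1"
    and long: "n + card {v\<in>L. length v = n} \<le> length W"
    and no_special: "\<And>u. sublist u W \<Longrightarrow> length u = n \<Longrightarrow> \<not> l_special L u"
  shows "periodic_lang L"
proof -
  define c where "c = card {v\<in>L. length v = n}"
  have windows: "window n W k \<in> {v\<in>L. length v = n}" if "k \<le> c" for k
    using window_in_factorial[OF L(1) W n] that long unfolding c_def by auto
  have "card (window n W ` {0..c}) \<le> card {v\<in>L. length v = n}"
    using windows finite_lists_of_length[of n] by (intro card_mono) (auto intro: finite_subset)
  hence "\<not> inj_on (window n W) {0..c}" by (intro pigeonhole) (simp add: c_def)
  then obtain s t where "s \<le> c" "t \<le> c" "s \<noteq> t" "window n W s = window n W t"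
    unfolding inj_on_def by auto
  then obtain s t where st: "s < t" "t \<le> c" "window n W s = window n W t"
    by (metis linorder_neqE_nat)
  have t_len: "t + n \<le> length W" using st(2) long unfolding c_def by simp
  have not_special: "\<not> l_special L (window n W i)" if "s \<le> i" "i \<le> t" for i
    using no_special[OF sublist_window] windows[of i] st that by simp
  show ?thesis
  proof (rule periodic_lang_if_left_step_periodic[OF L(1,2) n])
    show "0 < t - s" using st by simp
    fix v assume "v \<in> L" "length v = n"
    then obtain k where "k \<in> {s..t}" "v = window n W k"
      using word_in_windows_cycle[OF L(1,3) W t_len n st(1,3) not_special] by blast
    thus "\<not> l_special L v \<and> (left_step L ^^ (t - s)) v = v"
      using left_step_windows_cycle[OF L(1) W t_len n _ st(3) not_special] st(1) not_special
      by auto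
  qed
qed

lemma mem_rev_image_iff: "w \<in> rev ` L \<longleftrightarrow> rev w \<in> L"
  by (metis image_iff rev_rev_ident)

lemma factorial_rev_image:
  assumes "factorial L" shows "factorial (rev ` L)"
  unfolding factorial_def
proof (intro ballI allI impI)
  fix w u assume "w \<in> rev ` L" "sublist u w" "u \<noteq> []"
  hence "rev u \<in> L" using factorialD[OF assms, of "rev w" "rev u"] by (simp add: mem_rev_image_iff)
  thus "u \<in> rev ` L" by (simp add: mem_rev_image_iff)
qed

lemma right_extendable_rev_image: "left_extendable L \<Longrightarrow> right_extendable (rev ` L)"
  unfolding left_extendable_def right_extendable_def mem_rev_image_iff by simp

lemma irreducible_rev_image:
  assumes "irreducible L" shows "irreducible (rev ` L)"
  unfolding irreducible_def
proof (intro ballI)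
  fix u v assume "u \<in> rev ` L" "v \<in> rev ` L"
  then obtain z where "rev v @ z @ rev u \<in> L"
    using assms unfolding irreducible_def mem_rev_image_iff by blast
  thus "\<exists>z. u @ z @ v \<in> rev ` L"
    by (intro exI[of _ "rev z"]) (simp add: mem_rev_image_iff)
qed

lemma l_special_rev_image: "l_special (rev ` L) u \<longleftrightarrow> r_special L (rev u)"
  unfolding l_special_def r_special_def mem_rev_image_iff by simp

lemma card_rev_image_length:
  "card {v \<in> rev ` L. length v = n} = card {v \<in> L. length v = n}"
proof -
  have "{v \<in> rev ` L. length v = n} = rev ` {v \<in> L. length v = n}" by auto
  thus ?thesis by (simp add: card_image)
qed

lemma periodic_lang_rev_image: "periodic_lang (rev ` L) \<Longrightarrow> periodic_lang L"
  unfolding periodic_lang_def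
proof (elim exE conjE, intro exI conjI ballI allI impI)
  fix P w i
  assume P: "\<forall>w\<in>rev ` L. \<forall>i. i + P < length w \<longrightarrow> w ! i = w ! (i + P)"
    and w: "w \<in> L" and i: "i + P < length w"
  have "rev w ! (length w - 1 - (i + P)) = rev w ! (length w - 1 - (i + P) + P)"
    using P w i by auto
  moreover have "length w - 1 - (i + P) + P = length w - 1 - i" using i by simp
  ultimately show "w ! i = w ! (i + P)" using i by (simp add: rev_nth)
qed

lemma periodic_lang_if_long_word_without_r_special:
  fixes L :: "'a::finite list set"
  assumes L: "factorial L" "left_extendable L" "irreducible L" and W: "W \<in> L" and n: "n \<ge> 1"
    and long: "n + card {v\<in>L. length v = n} \<le> length W"
    and no_special: "\<And>u. sublist u W \<Longrightarrow> length u = n \<Longrightarrow> \<not> r_special L u"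
  shows "periodic_lang L"
proof (rule periodic_lang_rev_image, rule periodic_lang_if_long_word_without_l_special)
  show "factorial (rev ` L)" "right_extendable (rev ` L)" "irreducible (rev ` L)"
    using L by (simp_all add: factorial_rev_image right_extendable_rev_image irreducible_rev_image)
  show "rev W \<in> rev ` L" using W by simp
  show "n + card {v \<in> rev ` L. length v = n} \<le> length (rev W)"
    using long by (simp add: card_rev_image_length)
  show "\<not> l_special (rev ` L) u" if "sublist u (rev W)" "length u = n" for u
    using no_special that by (simp add: l_special_rev_image sublist_rev_right)
qed fact

lemma map_funpow_shift_upt: "map ((shift ^^ k) y) [i..<j] = map y [i + k..<j + k]"
proof -
  have "(shift ^^ k) y = (\<lambda>m. y (m + k))"
    by (induction k arbitrary: y) (auto simp: shift_def funpow_Suc_right)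
  thus ?thesis by (auto intro!: nth_equalityI simp: ac_simps)
qed

lemma funpow_shift_in_subshift:
  assumes "subshift X" "y \<in> X" shows "(shift ^^ k) y \<in> X"
proof (induction k)
  case (Suc k)
  hence "shift ((shift ^^ k) y) \<in> shift ` X" by blast
  thus ?case using assms(1) unfolding subshift_def by simp
qed (use assms(2) in simp)

lemma funpow_shift_preimage_in_subshift:
  assumes "subshift X" "y \<in> X" shows "\<exists>y'\<in>X. (shift ^^ k) y' = y"
proof (induction k)
  case (Suc k)
  then obtain y' where "y' \<in> X" "(shift ^^ k) y' = y" by blast
  moreover obtain y'' where "y'' \<in> X" "shift y'' = y'"
    using assms(1) \<open>y' \<in> X\<close> unfolding subshift_def by (metis imageE)
  ultimately show ?case by (intro bexI[of _ y'']) (simp_all add: funpow_swap1)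
qed (use assms(2) in simp)

lemma lang_iff: "w \<in> lang X \<longleftrightarrow> w \<noteq> [] \<and> (\<exists>y\<in>X. \<exists>i. map y [i..<i + length w] = w)"
  unfolding lang_def by (auto simp: eq_commute[of w])

lemma map_upt_in_lang: "y \<in> X \<Longrightarrow> i < j \<Longrightarrow> map y [i..<j] \<in> lang X"
  unfolding lang_iff by (intro conjI bexI exI[of _ i]) auto

lemma lang_occurs_at:
  assumes "subshift X" "w \<in> lang X" shows "\<exists>y\<in>X. map y [p..<p + length w] = w"
proof -
  obtain y i where "y \<in> X" "map y [i..<i + length w] = w" using assms(2) unfolding lang_iff by blast
  moreover obtain y' where "y' \<in> X" "(shift ^^ p) y' = (shift ^^ i) y"
    using funpow_shift_preimage_in_subshift[OF assms(1) funpow_shift_in_subshift[OF assms(1)]]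
      \<open>y \<in> X\<close> by blast
  moreover have "map ((shift ^^ p) y') [0..<length w] = map y' [p..<p + length w]"
    and "map ((shift ^^ i) y) [0..<length w] = map y [i..<i + length w]"
    by (simp_all add: map_funpow_shift_upt add.commute)
  ultimately show ?thesis by metis
qed

lemma factorial_lang: "factorial (lang X)"
  unfolding factorial_def
proof (intro ballI allI impI)
  fix w u assume "w \<in> lang X" "sublist u w" "u \<noteq> []"
  then obtain y i where y: "y \<in> X" "map y [i..<i + length w] = w" unfolding lang_iff by blast
  obtain p s where w: "w = p @ u @ s" using \<open>sublist u w\<close> unfolding sublist_def by blast
  have "u = take (length u) (drop (length p) w)" using w by simp
  also have "\<dots> = map y [i + length p..<i + length p + length u]"
    by (subst y(2)[symmetric]) (simp add: take_map drop_map w)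
  also have "\<dots> \<in> lang X" using y(1) \<open>u \<noteq> []\<close> by (intro map_upt_in_lang) auto
  finally show "u \<in> lang X" .
qed

lemma right_extendable_lang: "right_extendable (lang X)"
  unfolding right_extendable_def
proof
  fix w assume "w \<in> lang X"
  then obtain y i where "y \<in> X" "map y [i..<i + length w] = w" unfolding lang_iff by blast
  hence "w @ [y (i + length w)] = map y [i..<Suc (i + length w)]" by simp
  also have "\<dots> \<in> lang X" using \<open>y \<in> X\<close> by (rule map_upt_in_lang) simp
  finally show "\<exists>b. w @ [b] \<in> lang X" ..
qed

lemma left_extendable_lang:
  assumes "subshift X" shows "left_extendable (lang X)"
  unfolding left_extendable_def
proof
  fix w assume "w \<in> lang X"
  then obtain y where "y \<in> X" "map y [1..<1 + length w] = w" using lang_occurs_at[OF assms] by blast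
  hence "y 0 # w = map y [0..<Suc (length w)]" by (simp add: upt_rec)
  also have "\<dots> \<in> lang X" using \<open>y \<in> X\<close> by (rule map_upt_in_lang) simp
  finally show "\<exists>a. a # w \<in> lang X" ..
qed

lemma open_in_X_occurrences: "open_in_X X {y \<in> X. map y [p..<p + length w] = w}"
  unfolding open_in_X_def cyl_def
proof (intro conjI ballI exI[of _ "p + length w"])
  fix y assume y: "y \<in> {y \<in> X. map y [p..<p + length w] = w}"
  show "{y' \<in> X. \<forall>i<p + length w. y' i = y i} \<subseteq> {y \<in> X. map y [p..<p + length w] = w}"
  proof safe
    fix y' assume "y' \<in> X" "\<forall>i<p + length w. y' i = y i"
    hence "map y' [p..<p + length w] = map y [p..<p + length w]" by (intro map_cong) auto
    also have "\<dots> = w" using y by simp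
    finally show "map y' [p..<p + length w] = w" .
  qed
qed auto

text \<open>The cylinder \<open>V\<close> fixes \<open>v\<close> at position \<open>|u|\<close> rather than \<open>0\<close>, so that the occurrence
  of \<open>v\<close> found by transitivity starts only after \<open>u\<close> has ended.\<close>
lemma irreducible_lang:
  assumes ss: "subshift X" and tr: "transitive_shift X" shows "irreducible (lang X)"
  unfolding irreducible_def
proof (intro ballI)
  fix u v assume u: "u \<in> lang X" and v: "v \<in> lang X"
  define U where "U = {y \<in> X. map y [0..<length u] = u}"
  define V where "V = {y \<in> X. map y [length u..<length u + length v] = v}"
  have "U \<noteq> {}" "V \<noteq> {}"
    unfolding U_def V_def using lang_occurs_at[OF ss u, of 0] lang_occurs_at[OF ss v] by auto
  moreover have "open_in_X X U" "open_in_X X V"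
    unfolding U_def V_def using open_in_X_occurrences[of X 0 u] open_in_X_occurrences by simp_all
  ultimately obtain m y where y: "y \<in> U" "(shift ^^ m) y \<in> V"
    using tr unfolding transitive_shift_def by blast
  have "map y [0..<length u + m + length v]
      = map y [0..<length u] @ map y [length u..<length u + m] @ map y [length u + m..<length u + m + length v]"
    using upt_add_eq_append[of 0 "length u + m" "length v"]
      upt_add_eq_append[of 0 "length u" m] by simp
  also have "\<dots> = u @ map y [length u..<length u + m] @ v"
    using y unfolding U_def V_def by (simp add: map_funpow_shift_upt add.commute add.left_commute)
  moreover have "map y [0..<length u + m + length v] \<in> lang X"
    using y(1) u unfolding U_def by (intro map_upt_in_lang) (auto simp: lang_iff)
  ultimately show "\<exists>z. u @ z @ v \<in> lang X" by auto
qed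

lemma factor_in_lang: "x \<in> X \<Longrightarrow> i \<le> j \<Longrightarrow> factor x i j \<in> lang X"
  unfolding factor_def by (rule map_upt_in_lang) simp_all

lemma special_words_in_factor:
  fixes X :: "(nat \<Rightarrow> 'a::finite) set"
  assumes X: "subshift X" "transitive_shift X" "\<not> periodic_lang (lang X)" and "x \<in> X"
    and n: "n \<ge> 1" and long: "n + complexity X n \<le> Suc k - j"
  shows "(\<exists>w\<in>lang_n X n. l_special (lang X) w \<and> sublist w (factor x j k)) \<and>
    (\<exists>w\<in>lang_n X n. r_special (lang X) w \<and> sublist w (factor x j k))"
proof -
  have W: "factor x j k \<in> lang X" using assms(4) by (rule factor_in_lang) (use n long in simp)
  have long': "n + card {v \<in> lang X. length v = n} \<le> length (factor x j k)"
    using long n unfolding complexity_def lang_n_def factor_def by (auto simp: Suc_diff_le)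
  have "u \<in> lang_n X n" if "sublist u (factor x j k)" "length u = n" for u
    using factorialD[OF factorial_lang W that(1)] that(2) n unfolding lang_n_def by fastforce
  thus ?thesis
    using periodic_lang_if_long_word_without_l_special[OF factorial_lang right_extendable_lang
        irreducible_lang[OF X(1,2)] W n long']
      periodic_lang_if_long_word_without_r_special[OF factorial_lang left_extendable_lang[OF X(1)]
        irreducible_lang[OF X(1,2)] W n long']
      X(3) by blast
qed

theorem mainTheorem8:
  fixes X :: "(nat \<Rightarrow> 'a::finite) set" and K :: nat and x :: "nat \<Rightarrow> 'a"
  assumes "subshift X" and "transitive_shift X"
    and "eventually_constant_growth X K"
    and "x \<in> X"
  shows "periodic_lang (lang X) \<or>
    (\<exists>N. \<forall>n\<ge>N. \<forall>j.
       (\<exists>w\<in>lang_n X n. l_special (lang X) w \<and> sublist w (factor x j (j + (K + 2) * n - 2))) \<and>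
       (\<exists>w\<in>lang_n X n. r_special (lang X) w \<and> sublist w (factor x j (j + (K + 2) * n - 2))))"
proof -
  obtain N0 C where growth: "\<And>n. n \<ge> N0 \<Longrightarrow> int (complexity X n) = int K * int n + C"
    using assms(3) unfolding eventually_constant_growth_def by blast
  show ?thesis
  proof (subst disj_commute, rule disjCI, intro exI[of _ "N0 + nat C + 1"] allI impI
      special_words_in_factor[OF assms(1,2) _ assms(4)])
    fix n j assume not_periodic: "\<not> periodic_lang (lang X)" and n: "N0 + nat C + 1 \<le> n"
    show "\<not> periodic_lang (lang X)" by (fact not_periodic)
    show "n \<ge> 1" using n by simp
    have "2 \<le> (K + 2) * n" using mult_le_mono[of 2 "K + 2" 1 n] n by simp
    moreover have "int (n + complexity X n) \<le> int ((K + 2) * n - 1)"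
      using growth[of n] n \<open>2 \<le> (K + 2) * n\<close> by (simp add: algebra_simps of_nat_diff)
    ultimately show "n + complexity X n \<le> Suc (j + (K + 2) * n - 2) - j" by linarith
  qed
qed

end
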